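(* In the algebra $\mathcal A$, the quantum superdeterminant $\mathcal D_h = a d^{-1} - \beta d^{-1}\gamma d^{-1}$ commutes with each of the generators $a,\beta,\gamma,d$.
   Context: Let $h$ be an odd (Grassmann) parameter with $h^2=0$. Throughout, even elements commute with everything and odd elements anticommute with each other. Let $\mathcal A$ be the associative $\mathbb Z_2$-graded algebra generated by even invertible elements $a,d$ and odd elements $\beta,\gamma$ (with $h$ commuting with $a,d$ and anticommuting with $\beta,\gamma$), subject to the relations $a\beta=\beta a$, $a\gamma=\gamma a+h a^2(1-\mathcal D_h^{-1})$, $d\beta=\beta d$, $d\gamma=\gamma d+h d^2(\mathcal D_h-1)$, $\beta^2=0$, $\gamma^2=h\gamma d(1-\mathcal D_h)$, $\beta\gamma=-\gamma\beta+h\beta d(1-\mathcal D_h)$, $ad=da+h\beta d(\mathcal D_h-1)$, where $\mathcal D_h=ad^{-1}-\beta d^{-1}\gamma d^{-1}$ is assumed invertible. This algebra is called the quantum supergroup $GL_h(1|1)$, with $T=\begin{pmatrix} a&\beta\\ \gamma& d\end{pmatrix}$. *)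

theory Defs
  imports Complex_Main
begin

text \<open>Quantum superdeterminant D_h = a d^{-1} - beta d^{-1} gamma d^{-1},
  where di denotes the (two-sided) inverse of d.\<close>
definition qsdet :: "'a::ring_1 \<Rightarrow> 'a \<Rightarrow> 'a \<Rightarrow> 'a \<Rightarrow> 'a" where
  "qsdet a beta gamma di = a * di - beta * di * gamma * di"

end

theory Submission
  imports Defs
begin

text \<open>Order monomials as \<open>h, \<beta>, a, d\<^sup>\<plusminus>\<^sup>1, \<gamma>\<close>. Each defining relation
  reorders two generators up to a correction term carrying the factor \<open>h\<close>. Since \<open>h\<^sup>2 = 0\<close>,
  after multiplication by \<open>h\<close> all generators supercommute and \<open>D\<^sub>h\<close>, \<open>D\<^sub>h\<^sup>-\<^sup>1\<close> take their
  classical values, so every correction term can be evaluated in terms of the generators alone.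
  The resulting rules rewrite any expression to a normal-ordered polynomial in the generators,
  and both sides of \<open>D\<^sub>h x = x D\<^sub>h\<close> normalize to the same polynomial.\<close>

text \<open>\<open>algebra_simps\<close> associates products to the right, so a rewrite rule \<open>x * y = r\<close>
  is also needed in the form \<open>x * (y * z) = r * z\<close>.\<close>

lemma mult_assoc_cong: "(x::'a::semigroup_mult) * y = r \<Longrightarrow> x * (y * z) = r * z"
  by (metis mult.assoc)

lemma commute_with_inverse:
  fixes x y yi :: "'a::monoid_mult"
  assumes "y * yi = 1" "yi * y = 1" and "x * y = y * x"
  shows "x * yi = yi * x"
  by (metis assms mult.assoc mult_1_left mult_1_right)

locale gl_h_11 =
  fixes a d di beta gamma h Di :: "'a::ring_1"
  assumes d_inv: "d * di = 1" "di * d = 1"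
    and D_inv: "qsdet a beta gamma di * Di = 1" "Di * qsdet a beta gamma di = 1"
    and h_a: "h * a = a * h" and h_d: "h * d = d * h"
    and h_beta: "h * beta = - (beta * h)" and h_gamma: "h * gamma = - (gamma * h)"
    and h_sq: "h * h = 0"
    and a_beta: "a * beta = beta * a"
    and a_gamma: "a * gamma = gamma * a + h * a^2 * (1 - Di)"
    and d_beta: "d * beta = beta * d"
    and d_gamma: "d * gamma = gamma * d + h * d^2 * (qsdet a beta gamma di - 1)"
    and beta_sq: "beta * beta = 0"
    and gamma_sq: "gamma * gamma = h * gamma * d * (1 - qsdet a beta gamma di)"
    and beta_gamma: "beta * gamma = - (gamma * beta) + h * beta * d * (1 - qsdet a beta gamma di)"
    and a_d: "a * d = d * a + h * beta * d * (qsdet a beta gamma di - 1)"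
begin

abbreviation D where "D \<equiv> qsdet a beta gamma di"

lemma di_h: "di * h = h * di"
  using commute_with_inverse[OF d_inv h_d] by simp

lemma di_beta: "di * beta = beta * di"
  using commute_with_inverse[OF d_inv d_beta[symmetric]] by simp

lemma beta_h: "beta * h = - (h * beta)"
  by (simp add: h_beta)

lemma gamma_h: "gamma * h = - (h * gamma)"
  by (simp add: h_gamma)

lemmas h_to_front = h_a[symmetric] h_d[symmetric] di_h beta_h gamma_h h_sq

lemma gamma_beta_D: "gamma * beta = - (beta * gamma) - h * beta * d * (D - 1)"
  by (simp add: beta_gamma algebra_simps)

lemma d_a_D: "d * a = a * d - h * beta * d * (D - 1)"
  by (simp add: a_d)

lemma di_a_D: "di * a = a * di + h * beta * (D - 1) * di"
proof -
  have "di * (a * d) * di = di * (d * a + h * beta * d * (D - 1)) * di"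
    using a_d by simp
  then show ?thesis
    by (simp add: algebra_simps h_to_front h_to_front[THEN mult_assoc_cong]
        d_inv d_inv[THEN mult_assoc_cong] di_beta di_beta[THEN mult_assoc_cong])
qed

lemma gamma_a_Di: "gamma * a = a * gamma - h * a^2 * (1 - Di)"
  by (simp add: a_gamma)

lemma gamma_d_D: "gamma * d = d * gamma - h * d^2 * (D - 1)"
  by (simp add: d_gamma)

lemma gamma_di_D: "gamma * di = di * gamma + h * d * (D - 1) * di"
proof -
  have "di * (d * gamma) * di = di * (gamma * d + h * d^2 * (D - 1)) * di"
    using d_gamma by simp
  then show ?thesis
    by (simp add: algebra_simps power2_eq_square h_to_front h_to_front[THEN mult_assoc_cong]
        d_inv d_inv[THEN mult_assoc_cong])
qed

lemma gamma_sq_D: "gamma * gamma = - (h * gamma * d * (D - 1))"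
  by (simp add: gamma_sq algebra_simps)

lemmas reorder_D = h_to_front beta_sq a_beta d_beta di_beta gamma_beta_D d_a_D di_a_D d_inv
  gamma_a_Di gamma_d_D gamma_di_D gamma_sq_D

text \<open>Classically \<open>D\<^sup>-\<^sup>1 = d/a + \<beta>\<gamma>/a\<^sup>2\<close>.\<close>

lemma h_a2_Di: "h * a^2 * Di = h * (a * d + beta * gamma)"
proof -
  have "h * (a * d + beta * gamma) * D = h * a^2"
    unfolding qsdet_def
    by (simp add: algebra_simps power2_eq_square reorder_D reorder_D[THEN mult_assoc_cong])
  then show ?thesis
    by (metis D_inv(1) mult.assoc mult_1_right)
qed

lemma h_beta_d_D: "h * beta * d * (D - 1) = h * beta * (a - d)"
  unfolding qsdet_def
  by (simp add: algebra_simps reorder_D reorder_D[THEN mult_assoc_cong])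

lemma h_beta_D_di: "h * beta * (D - 1) * di = h * beta * (a * di - 1) * di"
  unfolding qsdet_def
  by (simp add: algebra_simps reorder_D reorder_D[THEN mult_assoc_cong])

lemma h_d2_D: "h * d^2 * (D - 1) = h * (a * d - beta * gamma - d^2)"
  unfolding qsdet_def
  by (simp add: algebra_simps power2_eq_square reorder_D reorder_D[THEN mult_assoc_cong])

lemma h_d_D_di: "h * d * (D - 1) * di = h * (a * di - beta * di * di * gamma - 1)"
  unfolding qsdet_def
  by (simp add: algebra_simps reorder_D reorder_D[THEN mult_assoc_cong])

lemma h_gamma_d_D: "h * gamma * d * (D - 1) = h * (a - d) * gamma"
  unfolding qsdet_def
  by (simp add: algebra_simps reorder_D reorder_D[THEN mult_assoc_cong])

lemma gamma_a: "gamma * a = a * gamma - h * a^2 + h * (a * d + beta * gamma)"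
  using gamma_a_Di by (simp add: right_diff_distrib h_a2_Di)

lemmas gamma_beta = gamma_beta_D[unfolded h_beta_d_D]
lemmas d_a = d_a_D[unfolded h_beta_d_D]
lemmas di_a = di_a_D[unfolded h_beta_D_di]
lemmas gamma_d = gamma_d_D[unfolded h_d2_D]
lemmas gamma_di = gamma_di_D[unfolded h_d_D_di]
lemmas gamma_gamma = gamma_sq_D[unfolded h_gamma_d_D]

lemmas reorder = h_to_front beta_sq a_beta d_beta di_beta gamma_beta d_a di_a d_inv
  gamma_a gamma_d gamma_di gamma_gamma

lemma D_a: "D * a = a * D"
  unfolding qsdet_def
  by (simp add: algebra_simps power2_eq_square reorder reorder[THEN mult_assoc_cong])

lemma D_beta: "D * beta = beta * D"
  unfolding qsdet_def
  by (simp add: algebra_simps power2_eq_square reorder reorder[THEN mult_assoc_cong])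

lemma D_gamma: "D * gamma = gamma * D"
  unfolding qsdet_def
  by (simp add: algebra_simps power2_eq_square reorder reorder[THEN mult_assoc_cong])

lemma D_d: "D * d = d * D"
  unfolding qsdet_def
  by (simp add: algebra_simps power2_eq_square reorder reorder[THEN mult_assoc_cong])

end

theorem mainTheorem1:
  fixes a ai d di beta gamma h Di :: "'a::real_algebra_1"
  assumes a_inv: "a * ai = 1" "ai * a = 1"
    and d_inv: "d * di = 1" "di * d = 1"
    and D_inv: "qsdet a beta gamma di * Di = 1" "Di * qsdet a beta gamma di = 1"
    and h_a: "h * a = a * h" and h_d: "h * d = d * h"
    and h_beta: "h * beta = - (beta * h)" and h_gamma: "h * gamma = - (gamma * h)"
    and h_sq: "h * h = 0"
    and r1: "a * beta = beta * a"
    and r2: "a * gamma = gamma * a + h * a^2 * (1 - Di)"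
    and r3: "d * beta = beta * d"
    and r4: "d * gamma = gamma * d + h * d^2 * (qsdet a beta gamma di - 1)"
    and r5: "beta * beta = 0"
    and r6: "gamma * gamma = h * gamma * d * (1 - qsdet a beta gamma di)"
    and r7: "beta * gamma = - (gamma * beta) + h * beta * d * (1 - qsdet a beta gamma di)"
    and r8: "a * d = d * a + h * beta * d * (qsdet a beta gamma di - 1)"
  shows "qsdet a beta gamma di * a = a * qsdet a beta gamma di
       \<and> qsdet a beta gamma di * beta = beta * qsdet a beta gamma di
       \<and> qsdet a beta gamma di * gamma = gamma * qsdet a beta gamma di
       \<and> qsdet a beta gamma di * d = d * qsdet a beta gamma di"
proof -
  interpret gl_h_11 a d di beta gamma h Di
    by unfold_locales (fact d_inv D_inv h_a h_d h_beta h_gamma h_sq r1 r2 r3 r4 r5 r6 r7 r8)+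
  show ?thesis
    using D_a D_beta D_gamma D_d by blast
qed

end
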